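(* Let $j\ge2$, let $H$ be a graph, and let $G\cong\mathsf{TS}_j(H)$ with $q=\omega(G)\ge j+2$. Suppose every vertex of $G$ lies in exactly $t$ maximum cliques of $G$ (cliques of size $q$). Then $j$ divides $t$.
   Context: All graphs are finite, simple, undirected; $\omega(G)$ is the clique number. A $k$-clique of a graph $H$ is a set of $k$ pairwise adjacent vertices. For a graph $H$ and integer $k\ge1$, the Token Sliding graph $\mathsf{TS}_k(H)$ has as vertices the $k$-cliques of $H$, and two $k$-cliques $A,B$ are adjacent iff $A\setminus B=\{u\}$, $B\setminus A=\{v\}$ for some vertices $u,v$ with $uv\in E(H)$. *)

theory Defs
  imports Main
begin

definition graph :: "'a set \<Rightarrow> ('a \<Rightarrow> 'a \<Rightarrow> bool) \<Rightarrow> bool" where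
  "graph V E \<longleftrightarrow> finite V \<and> (\<forall>u v. E u v \<longrightarrow> u \<in> V \<and> v \<in> V \<and> u \<noteq> v \<and> E v u)"

definition is_clique :: "'a set \<Rightarrow> ('a \<Rightarrow> 'a \<Rightarrow> bool) \<Rightarrow> 'a set \<Rightarrow> bool" where
  "is_clique V E S \<longleftrightarrow> S \<subseteq> V \<and> (\<forall>u\<in>S. \<forall>v\<in>S. u \<noteq> v \<longrightarrow> E u v)"

definition k_cliques :: "'a set \<Rightarrow> ('a \<Rightarrow> 'a \<Rightarrow> bool) \<Rightarrow> nat \<Rightarrow> 'a set set" where
  "k_cliques V E k = {S. is_clique V E S \<and> finite S \<and> card S = k}"

definition clique_number :: "'a set \<Rightarrow> ('a \<Rightarrow> 'a \<Rightarrow> bool) \<Rightarrow> nat" where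
  "clique_number V E = Max {card S | S. is_clique V E S}"

definition TS_vertices :: "'a set \<Rightarrow> ('a \<Rightarrow> 'a \<Rightarrow> bool) \<Rightarrow> nat \<Rightarrow> 'a set set" where
  "TS_vertices V E k = k_cliques V E k"

definition TS_edge :: "'a set \<Rightarrow> ('a \<Rightarrow> 'a \<Rightarrow> bool) \<Rightarrow> nat \<Rightarrow> 'a set \<Rightarrow> 'a set \<Rightarrow> bool" where
  "TS_edge V E k A B \<longleftrightarrow> A \<in> k_cliques V E k \<and> B \<in> k_cliques V E k \<and>
     (\<exists>u v. A - B = {u} \<and> B - A = {v} \<and> E u v)"

definition graph_iso :: "'a set \<Rightarrow> ('a \<Rightarrow> 'a \<Rightarrow> bool) \<Rightarrow> 'b set \<Rightarrow> ('b \<Rightarrow> 'b \<Rightarrow> bool) \<Rightarrow> ('a \<Rightarrow> 'b) \<Rightarrow> bool" where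
  "graph_iso V1 E1 V2 E2 f \<longleftrightarrow> bij_betw f V1 V2 \<and> (\<forall>u\<in>V1. \<forall>v\<in>V1. E1 u v \<longleftrightarrow> E2 (f u) (f v))"

end

theory Submission
  imports Defs
begin

text \<open>A clique T of TS_j(H) is a family of j-sets any two of which differ in exactly one
  element. If |T| \<ge> j + 2, such a family has a common (j-1)-element core K, since otherwise it
  lies inside a single (j+1)-set. Then T consists of the sets K \<union> {x} with x \<in> W - K, where
  W = \<Union>T is a clique of H with j + |T| - 1 vertices; conversely every such pair (K, W) yields a
  clique of TS_j(H). Fixing a vertex A of TS_j(H), the q-cliques through A therefore correspond
  bijectively to pairs (a, W) with a \<in> A and W \<supseteq> A a (j+q-1)-clique of H, the core being
  A - {a}. So their number is j times the number of such W, and the isomorphism carries this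
  count over to G.\<close>

lemma card_le_if_subsets_of_insert:
  assumes "finite A" and "\<forall>B\<in>F. B \<subseteq> insert b A \<and> card B = card A"
  shows "card F \<le> card A + 1"
proof -
  have "card F \<le> card {S. S \<subseteq> insert b A \<and> card S = card A}"
    using assms by (intro card_mono) auto
  also have "\<dots> = card (insert b A) choose card A" using assms(1) by (simp add: n_subsets)
  also have "\<dots> \<le> card A + 1" using assms(1) by (cases "b \<in> A") (simp_all add: insert_absorb)
  finally show ?thesis .
qed

lemma adjacent_exchanges_add_same:
  assumes "a \<in> A" "a' \<in> A" "a \<noteq> a'" "b \<notin> A" "b' \<notin> A"
    and "insert b (A - {a}) - insert b' (A - {a'}) = {u}"
  shows "b = b'"
proof (rule ccontr)
  assume "b \<noteq> b'"
  then have "{b, a'} \<subseteq> insert b (A - {a}) - insert b' (A - {a'})" using assms(1-5) by auto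
  then show False using assms by auto
qed

lemma common_core_of_adjacent_sets:
  assumes sets: "\<forall>B\<in>F. finite B \<and> card B = j"
    and adj: "\<forall>B\<in>F. \<forall>C\<in>F. B \<noteq> C \<longrightarrow> (\<exists>u v. B - C = {u} \<and> C - B = {v})"
    and A: "A \<in> F" and card_F: "j + 2 \<le> card F"
  shows "\<exists>a\<in>A. \<forall>B\<in>F. A - {a} \<subseteq> B"
proof (rule ccontr)
  assume no_core: "\<not> ?thesis"
  define out where "out B = the_elem (A - B)" for B
  define new where "new B = the_elem (B - A)" for B
  have out: "out B \<in> A" and new: "new B \<notin> A"
    and mem: "\<And>x. x \<in> B \<longleftrightarrow> x = new B \<or> x \<in> A \<and> x \<noteq> out B"
    if "B \<in> F - {A}" for B
  proof -
    have "B \<in> F" "A \<noteq> B" using that by auto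
    then obtain u v where "A - B = {u}" "B - A = {v}" using adj A by meson
    then have out_B: "A - B = {out B}" and new_B: "B - A = {new B}" by (simp_all add: out_def new_def)
    then show "out B \<in> A" "new B \<notin> A" by blast+
    show "\<And>x. x \<in> B \<longleftrightarrow> x = new B \<or> x \<in> A \<and> x \<noteq> out B"
      using out_B new_B by (metis Diff_iff insertCI singletonD)
  qed
  have same_new: "new B = new C" if B: "B \<in> F - {A}" and C: "C \<in> F - {A}" and "out B \<noteq> out C" for B C
  proof -
    have "B \<noteq> C" using \<open>out B \<noteq> out C\<close> by blast
    then obtain u where "B - C = {u}" using adj B C by blast
    moreover have "insert (new B) (A - {out B}) = B" "insert (new C) (A - {out C}) = C"
      using mem[OF B] mem[OF C] by auto
    ultimately show ?thesis
      using adjacent_exchanges_add_same[OF out[OF B] out[OF C] \<open>out B \<noteq> out C\<close> new[OF B] new[OF C]]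
      by simp
  qed
  have "F \<noteq> {A}" using card_F by auto
  then obtain B where B: "B \<in> F - {A}" using A by blast
  have "\<not> (\<forall>C\<in>F. A - {out B} \<subseteq> C)" using no_core out[OF B] by blast
  then obtain C where "C \<in> F" "\<not> A - {out B} \<subseteq> C" by blast
  then have C: "C \<in> F - {A}" and "out C \<noteq> out B" using mem by auto
  \<comment> \<open>Each D \<noteq> A removes an element other than out B or other than out C, so it adds
    new B = new C.\<close>
  have new_B: "new D = new B" if D: "D \<in> F - {A}" for D
    using same_new[OF D B] same_new[OF D C] same_new[OF B C] \<open>out C \<noteq> out B\<close> by metis
  have "D \<subseteq> insert (new B) A" if "D \<in> F" for D
  proof (cases "D = A")
    case False
    then have "D \<in> F - {A}" using that by blast
    then show ?thesis using mem[OF \<open>D \<in> F - {A}\<close>] new_B[OF \<open>D \<in> F - {A}\<close>] by auto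
  qed blast
  moreover have "finite A" "card A = j" using sets A by auto
  ultimately have "\<forall>D\<in>F. D \<subseteq> insert (new B) A \<and> card D = card A" using sets by simp
  then have "card F \<le> card A + 1" by (rule card_le_if_subsets_of_insert[OF \<open>finite A\<close>])
  then show False using card_F \<open>card A = j\<close> by simp
qed

definition one_point_extensions :: "'a set \<Rightarrow> 'a set \<Rightarrow> 'a set set" where
  "one_point_extensions K W = (\<lambda>x. insert x K) ` (W - K)"

lemma card_one_point_extensions: "card (one_point_extensions K W) = card (W - K)"
  unfolding one_point_extensions_def by (rule card_image) (auto simp: inj_on_def)

lemma Union_one_point_extensions:
  assumes "K \<subseteq> W" and "W - K \<noteq> {}"
  shows "\<Union> (one_point_extensions K W) = W"
  using assms unfolding one_point_extensions_def by auto

lemma Inter_one_point_extensions: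
  assumes "2 \<le> card (W - K)"
  shows "\<Inter> (one_point_extensions K W) = K"
proof -
  have "finite (W - K)" using assms by (metis card.infinite not_numeral_le_zero)
  then obtain x y where "x \<in> W - K" "y \<in> W - K" "x \<noteq> y"
    using assms card_le_Suc0_iff_eq[of "W - K"] by auto
  then show ?thesis unfolding one_point_extensions_def by auto
qed

lemma one_point_extensions_eq_iff:
  assumes "K \<subseteq> W" "2 \<le> card (W - K)" "K' \<subseteq> W'" "2 \<le> card (W' - K')"
  shows "one_point_extensions K W = one_point_extensions K' W' \<longleftrightarrow> K = K' \<and> W = W'"
proof
  assume eq: "one_point_extensions K W = one_point_extensions K' W'"
  have "W - K \<noteq> {}" "W' - K' \<noteq> {}" using assms by auto
  then show "K = K' \<and> W = W'"
    using eq assms Inter_one_point_extensions Union_one_point_extensions by metis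
qed simp

lemma eq_one_point_extensions_Union:
  assumes "finite K" and "\<forall>B\<in>T. K \<subseteq> B \<and> card B = Suc (card K)"
  shows "T = one_point_extensions K (\<Union> T)"
proof -
  have "\<exists>x. x \<notin> K \<and> B = insert x K" if "B \<in> T" for B
  proof -
    have "card (B - K) = 1"
      using that assms by (simp add: card_Diff_subset)
    then obtain x where "B - K = {x}" by (auto simp: card_1_singleton_iff)
    then show ?thesis using that assms by blast
  qed
  then show ?thesis unfolding one_point_extensions_def by blast
qed

lemma is_clique_TS_one_point_extensions:
  assumes "is_clique V E W" and "finite K" and "Suc (card K) = j" and "K \<subseteq> W"
  shows "is_clique (k_cliques V E j) (TS_edge V E j) (one_point_extensions K W)"
proof -
  have ext: "insert x K \<in> k_cliques V E j" if "x \<in> W - K" for x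
    using assms that by (auto simp: k_cliques_def is_clique_def)
  show ?thesis
    unfolding is_clique_def one_point_extensions_def
  proof (intro conjI ballI impI)
    fix B C assume "B \<in> (\<lambda>x. insert x K) ` (W - K)" "C \<in> (\<lambda>x. insert x K) ` (W - K)" "B \<noteq> C"
    then obtain x y where "x \<in> W - K" "y \<in> W - K" "B = insert x K" "C = insert y K" "x \<noteq> y"
      by auto
    moreover have "E x y" using calculation assms(1) by (auto simp: is_clique_def)
    ultimately show "TS_edge V E j B C"
      using ext unfolding TS_edge_def by blast
  qed (use ext in blast)
qed

lemma is_clique_TS_one_point_extensionsD:
  assumes cl: "is_clique (k_cliques V E j) (TS_edge V E j) (one_point_extensions K W)"
    and "W - K \<noteq> {}"
  shows "is_clique V E W"
proof -
  have ext: "insert x K \<in> k_cliques V E j" if "x \<in> W - K" for x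
    using cl that by (auto simp: is_clique_def one_point_extensions_def)
  obtain z where z: "z \<in> W - K" using \<open>W - K \<noteq> {}\<close> by blast
  show ?thesis unfolding is_clique_def
  proof (intro conjI ballI impI)
    show "W \<subseteq> V"
    proof
      fix w assume "w \<in> W"
      then obtain y where "y \<in> W - K" "w \<in> insert y K" using z by blast
      then show "w \<in> V" using ext[of y] by (auto simp: k_cliques_def is_clique_def)
    qed
  next
    fix u v assume "u \<in> W" "v \<in> W" "u \<noteq> v"
    then consider "u \<in> W - K" "v \<in> W - K" | y where "y \<in> W - K" "u \<in> insert y K" "v \<in> insert y K"
      using z by blast
    then show "E u v"
    proof cases
      case 1
      then have "TS_edge V E j (insert u K) (insert v K)"
        using cl \<open>u \<noteq> v\<close> by (auto simp: is_clique_def one_point_extensions_def)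
      moreover have "insert u K - insert v K = {u}" "insert v K - insert u K = {v}"
        using 1 \<open>u \<noteq> v\<close> by auto
      ultimately show ?thesis by (auto simp: TS_edge_def)
    next
      case 2
      then show ?thesis
        using ext[of y] \<open>u \<noteq> v\<close> by (auto simp: k_cliques_def is_clique_def)
    qed
  qed
qed

lemma TS_clique_eq_one_point_extensions:
  assumes q: "j + 2 \<le> q" and T: "T \<in> k_cliques (k_cliques V E j) (TS_edge V E j) q" and A: "A \<in> T"
  shows "\<exists>a\<in>A. T = one_point_extensions (A - {a}) (\<Union> T) \<and> is_clique V E (\<Union> T)
    \<and> card (\<Union> T) = j + q - 1"
proof -
  have T_clique: "is_clique (k_cliques V E j) (TS_edge V E j) T" and "finite T" "card T = q"
    using T by (simp_all add: k_cliques_def)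
  then have sets: "\<forall>B\<in>T. finite B \<and> card B = j"
    by (auto simp: is_clique_def k_cliques_def)
  have adj: "\<forall>B\<in>T. \<forall>C\<in>T. B \<noteq> C \<longrightarrow> (\<exists>u v. B - C = {u} \<and> C - B = {v})"
  proof (intro ballI impI)
    fix B C assume "B \<in> T" "C \<in> T" "B \<noteq> C"
    then have "TS_edge V E j B C" using T_clique by (simp add: is_clique_def)
    then show "\<exists>u v. B - C = {u} \<and> C - B = {v}" by (auto simp: TS_edge_def)
  qed
  obtain a where a: "a \<in> A" and core: "\<forall>B\<in>T. A - {a} \<subseteq> B"
    using common_core_of_adjacent_sets[OF sets adj A] q \<open>card T = q\<close> by auto
  define K where "K = A - {a}"
  define W where "W = \<Union> T"
  have "finite A" "card A = j" using sets A by auto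
  then have "finite K" "Suc (card K) = j" using card_Suc_Diff1[of A a] a by (simp_all add: K_def)
  have T_eq: "T = one_point_extensions K W"
    unfolding W_def using eq_one_point_extensions_Union[OF \<open>finite K\<close>] core sets \<open>Suc (card K) = j\<close>
    by (simp add: K_def)
  have "K \<subseteq> W" "W - K \<noteq> {}" using A a by (auto simp: K_def W_def)
  then have "is_clique V E W"
    using is_clique_TS_one_point_extensionsD T_clique T_eq by blast
  have "finite W" using \<open>finite T\<close> sets by (simp add: W_def)
  have "card (W - K) = q" using card_one_point_extensions[of K W] T_eq \<open>card T = q\<close> by simp
  moreover have "card (W - K) = card W - card K" by (rule card_Diff_subset[OF \<open>finite K\<close> \<open>K \<subseteq> W\<close>])
  moreover have "card K \<le> card W" by (rule card_mono[OF \<open>finite W\<close> \<open>K \<subseteq> W\<close>])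
  ultimately have "card W = j + q - 1" using \<open>Suc (card K) = j\<close> by arith
  then show ?thesis using a T_eq \<open>is_clique V E W\<close> unfolding K_def W_def by blast
qed

lemma card_Diff_remove_in_superset:
  assumes "finite A" "a \<in> A" "A \<subseteq> W" "card W = card A + q - 1" "1 \<le> q"
  shows "card (W - (A - {a})) = q"
proof -
  have "Suc (card (A - {a})) = card A" by (rule card_Suc_Diff1[OF assms(1,2)])
  moreover have "card (W - (A - {a})) = card W - card (A - {a})"
  proof (rule card_Diff_subset)
    show "finite (A - {a})" "A - {a} \<subseteq> W" using assms by auto
  qed
  ultimately show ?thesis using assms(4,5) by arith
qed

lemma one_point_extensions_in_TS_cliques:
  assumes "A \<in> k_cliques V E j" "a \<in> A" "is_clique V E W" "card W = j + q - 1" "A \<subseteq> W" "1 \<le> q"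
  shows "one_point_extensions (A - {a}) W \<in> k_cliques (k_cliques V E j) (TS_edge V E j) q"
    and "A \<in> one_point_extensions (A - {a}) W"
proof -
  have "finite A" "card A = j" using assms(1) by (auto simp: k_cliques_def)
  then have "Suc (card (A - {a})) = j" using card_Suc_Diff1[OF \<open>finite A\<close> assms(2)] by simp
  moreover have "card (one_point_extensions (A - {a}) W) = q"
    using card_Diff_remove_in_superset[OF \<open>finite A\<close> assms(2,5)] assms(4,6) \<open>card A = j\<close>
    by (simp add: card_one_point_extensions)
  ultimately show "one_point_extensions (A - {a}) W \<in> k_cliques (k_cliques V E j) (TS_edge V E j) q"
    using is_clique_TS_one_point_extensions[of V E W "A - {a}" j] \<open>finite A\<close> assms
    by (auto simp: k_cliques_def intro: card_ge_0_finite)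
  show "A \<in> one_point_extensions (A - {a}) W"
    using assms(2,5) by (auto simp: one_point_extensions_def intro!: image_eqI[of _ _ a])
qed

lemma card_TS_cliques_containing:
  assumes q: "j + 2 \<le> q" and A: "A \<in> k_cliques V E j"
  shows "card {T. T \<in> k_cliques (k_cliques V E j) (TS_edge V E j) q \<and> A \<in> T}
    = j * card {W. is_clique V E W \<and> card W = j + q - 1 \<and> A \<subseteq> W}"
proof -
  let ?C = "{T. T \<in> k_cliques (k_cliques V E j) (TS_edge V E j) q \<and> A \<in> T}"
  let ?W = "{W. is_clique V E W \<and> card W = j + q - 1 \<and> A \<subseteq> W}"
  let ?ext = "\<lambda>(a, W). one_point_extensions (A - {a}) W"
  have "finite A" "card A = j" using A by (auto simp: k_cliques_def)
  have card_Diff: "card (W - (A - {a})) = q" if "a \<in> A" "W \<in> ?W" for a W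
    using card_Diff_remove_in_superset[OF \<open>finite A\<close>] that q \<open>card A = j\<close> by simp
  have ext_eqD: "a = a' \<and> W = W'"
    if "a \<in> A" "W \<in> ?W" "a' \<in> A" "W' \<in> ?W"
      and "one_point_extensions (A - {a}) W = one_point_extensions (A - {a'}) W'" for a W a' W'
  proof -
    have "A - {a} = A - {a'} \<and> W = W'"
      using one_point_extensions_eq_iff[of "A - {a}" W "A - {a'}" W'] that
        card_Diff[of a W] card_Diff[of a' W'] q
      by auto
    then show ?thesis using \<open>a \<in> A\<close> \<open>a' \<in> A\<close> by blast
  qed
  have inj: "inj_on ?ext (A \<times> ?W)"
  proof (rule inj_onI)
    fix p p' assume "p \<in> A \<times> ?W" "p' \<in> A \<times> ?W" "?ext p = ?ext p'"
    then show "p = p'" by (cases p, cases p') (auto dest: ext_eqD)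
  qed
  have img: "?ext ` (A \<times> ?W) = ?C"
  proof (intro equalityI subsetI)
    fix T assume "T \<in> ?ext ` (A \<times> ?W)"
    then obtain a W where "a \<in> A" "W \<in> ?W" "T = one_point_extensions (A - {a}) W" by auto
    then show "T \<in> ?C" using one_point_extensions_in_TS_cliques[OF A, of a W q] q by auto
  next
    fix T assume "T \<in> ?C"
    then obtain a where "a \<in> A" "T = one_point_extensions (A - {a}) (\<Union> T)"
      "is_clique V E (\<Union> T)" "card (\<Union> T) = j + q - 1"
      using TS_clique_eq_one_point_extensions q by blast
    moreover have "A \<subseteq> \<Union> T" using \<open>T \<in> ?C\<close> by blast
    ultimately have "(a, \<Union> T) \<in> A \<times> ?W" "T = ?ext (a, \<Union> T)" by simp_all
    then show "T \<in> ?ext ` (A \<times> ?W)" by (rule rev_image_eqI)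
  qed
  have "card ?C = card (A \<times> ?W)"
    using bij_betw_same_card[OF bij_betw_imageI[OF inj img]] by simp
  then show ?thesis using \<open>card A = j\<close> by (simp add: card_cartesian_product)
qed

lemma k_cliques_graph_iso_image_iff:
  assumes iso: "graph_iso V1 E1 V2 E2 f" and S: "S \<subseteq> V1"
  shows "f ` S \<in> k_cliques V2 E2 q \<longleftrightarrow> S \<in> k_cliques V1 E1 q"
proof -
  have inj: "inj_on f S" and img: "f ` S \<subseteq> V2"
    using iso S by (auto simp: graph_iso_def bij_betw_def intro: inj_on_subset)
  have "(\<forall>x\<in>f ` S. \<forall>y\<in>f ` S. x \<noteq> y \<longrightarrow> E2 x y) \<longleftrightarrow> (\<forall>u\<in>S. \<forall>w\<in>S. u \<noteq> w \<longrightarrow> E1 u w)"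
    using iso S inj by (auto simp: graph_iso_def inj_on_eq_iff) (metis subsetD)+
  then show ?thesis
    using inj img S by (simp add: k_cliques_def is_clique_def finite_image_iff card_image)
qed

lemma card_cliques_containing_graph_iso:
  assumes iso: "graph_iso V1 E1 V2 E2 f" and v: "v \<in> V1"
  shows "card {S. S \<in> k_cliques V1 E1 q \<and> v \<in> S} = card {T. T \<in> k_cliques V2 E2 q \<and> f v \<in> T}"
proof (rule bij_betw_same_card)
  have bij: "bij_betw f V1 V2" using iso by (simp add: graph_iso_def)
  then have inj: "inj_on f V1" by (rule bij_betw_imp_inj_on)
  have sub: "S \<subseteq> V1" if "S \<in> k_cliques V1 E1 q" for S
    using that by (simp add: k_cliques_def is_clique_def)
  show "bij_betw ((`) f) {S. S \<in> k_cliques V1 E1 q \<and> v \<in> S} {T. T \<in> k_cliques V2 E2 q \<and> f v \<in> T}"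
  proof (rule bij_betw_imageI)
    show "inj_on ((`) f) {S. S \<in> k_cliques V1 E1 q \<and> v \<in> S}"
      using inj_on_image_eq_iff[OF inj] sub by (auto intro: inj_onI)
  next
    show "(`) f ` {S. S \<in> k_cliques V1 E1 q \<and> v \<in> S} = {T. T \<in> k_cliques V2 E2 q \<and> f v \<in> T}"
    proof (intro equalityI subsetI)
      fix T assume "T \<in> {T. T \<in> k_cliques V2 E2 q \<and> f v \<in> T}"
      then have T: "T \<in> k_cliques V2 E2 q" "f v \<in> T" by auto
      define S where "S = V1 \<inter> f -` T"
      have "f ` S = T"
        using T bij by (auto simp: S_def k_cliques_def is_clique_def bij_betw_def)
      moreover have "S \<in> k_cliques V1 E1 q"
        using k_cliques_graph_iso_image_iff[OF iso, of S q] T \<open>f ` S = T\<close> by (simp add: S_def)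
      moreover have "v \<in> S" using v T by (simp add: S_def)
      ultimately show "T \<in> (`) f ` {S. S \<in> k_cliques V1 E1 q \<and> v \<in> S}" by blast
    qed (use k_cliques_graph_iso_image_iff[OF iso] sub in auto)
  qed
qed

lemma clique_number_empty: "clique_number {} E = 0"
proof -
  have "{card S | S. is_clique {} E S} = {0}" by (auto simp: is_clique_def)
  then show ?thesis by (simp add: clique_number_def)
qed

theorem proposition3p13:
  fixes VH :: "'a set" and EH :: "'a \<Rightarrow> 'a \<Rightarrow> bool"
    and VG :: "'b set" and EG :: "'b \<Rightarrow> 'b \<Rightarrow> bool"
    and j t q :: nat and f :: "'b \<Rightarrow> 'a set"
  assumes "graph VH EH" and "graph VG EG"
    and "j \<ge> 2"
    and "graph_iso VG EG (TS_vertices VH EH j) (TS_edge VH EH j) f"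
    and "q = clique_number VG EG" and "q \<ge> j + 2"
    and "\<forall>v\<in>VG. card {S. S \<in> k_cliques VG EG q \<and> v \<in> S} = t"
  shows "j dvd t"
proof -
  have "VG \<noteq> {}"
  proof
    assume "VG = {}"
    then show False using assms(5,6) clique_number_empty[of EG] by simp
  qed
  then obtain v where v: "v \<in> VG" by blast
  have "f v \<in> k_cliques VH EH j"
    using assms(4) v by (auto simp: graph_iso_def TS_vertices_def bij_betw_def)
  have "t = card {S. S \<in> k_cliques VG EG q \<and> v \<in> S}" using assms(7) v by simp
  also have "\<dots> = card {T. T \<in> k_cliques (k_cliques VH EH j) (TS_edge VH EH j) q \<and> f v \<in> T}"
    using card_cliques_containing_graph_iso[OF assms(4) v] by (simp add: TS_vertices_def)
  also have "\<dots> = j * card {W. is_clique VH EH W \<and> card W = j + q - 1 \<and> f v \<subseteq> W}"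
    using card_TS_cliques_containing[OF assms(6) \<open>f v \<in> k_cliques VH EH j\<close>] .
  finally show ?thesis by simp
qed

end
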